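(* Let $G=(\mathcal{V},\mathcal{E})$ be a simple connected graph and $\mathcal{C}$ a construction set of $G$. Then for all distinct $i,j\in\mathcal{V}$, $\{i,j\}\in\mathcal{E}$ if and only if $\Delta_{ij}=1$ (computed from $\mathbf{P}_{\mathcal{C}}$). In particular $G$ is recovered from $\mathbf{P}_{\mathcal{C}}$ by joining exactly the pairs with $\Delta_{ij}=1$.
   Context: All graphs are simple, undirected and connected. $h_{ij}$ is the shortest-path distance. For an ordered landmark set $\mathcal{M}=\{A_1,\dots,A_m\}\subseteq\mathcal{V}$, $\mathbf{P}_{\mathcal{M}}(i)=\langle h_{iA_1},\dots,h_{iA_m}\rangle$ and $\mathbf{P}_{\mathcal{M}}$ is the matrix with these rows. $\Delta^k_{ij}=|h_{iA_k}-h_{jA_k}|$ and $\Delta_{ij}=\max_k\Delta^k_{ij}$. $\mathcal{M}$ is a construction set of $G$ if $G$ is the unique simple connected graph on $\mathcal{V}$ whose distance vector matrix for landmarks $\mathcal{M}$ equals $\mathbf{P}_{\mathcal{M}}$. *)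

theory Defs
  imports Main
begin

definition simple_graph :: "'a set \<Rightarrow> 'a set set \<Rightarrow> bool" where
  "simple_graph V E \<longleftrightarrow> finite V \<and> (\<forall>e\<in>E. e \<subseteq> V \<and> card e = 2)"

definition walk :: "'a set set \<Rightarrow> 'a list \<Rightarrow> bool" where
  "walk E xs \<longleftrightarrow> xs \<noteq> [] \<and> (\<forall>k. Suc k < length xs \<longrightarrow> {xs ! k, xs ! Suc k} \<in> E)"

definition connected_graph :: "'a set \<Rightarrow> 'a set set \<Rightarrow> bool" where
  "connected_graph V E \<longleftrightarrow>
     (\<forall>u\<in>V. \<forall>v\<in>V. \<exists>xs. walk E xs \<and> hd xs = u \<and> last xs = v)"

definition hdist :: "'a set set \<Rightarrow> 'a \<Rightarrow> 'a \<Rightarrow> nat" where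
  "hdist E u v = (LEAST n. \<exists>xs. walk E xs \<and> hd xs = u \<and> last xs = v \<and> length xs = Suc n)"

definition dvec :: "'a set set \<Rightarrow> 'a list \<Rightarrow> 'a \<Rightarrow> nat list" where
  "dvec E M i = map (hdist E i) M"

definition landmark_set :: "'a set \<Rightarrow> 'a list \<Rightarrow> bool" where
  "landmark_set V M \<longleftrightarrow> M \<noteq> [] \<and> distinct M \<and> set M \<subseteq> V"

definition construction_set :: "'a set \<Rightarrow> 'a set set \<Rightarrow> 'a list \<Rightarrow> bool" where
  "construction_set V E M \<longleftrightarrow> landmark_set V M \<and>
     (\<forall>E'. simple_graph V E' \<and> connected_graph V E' \<and> (\<forall>i\<in>V. dvec E' M i = dvec E M i)
        \<longrightarrow> E' = E)"

definition Delta :: "'a set set \<Rightarrow> 'a list \<Rightarrow> 'a \<Rightarrow> 'a \<Rightarrow> int" where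
  "Delta E M i j = Max ((\<lambda>k. \<bar>int (dvec E M i ! k) - int (dvec E M j ! k)\<bar>) ` {..<length M})"

end

theory Submission
  imports Defs
begin

(* Distances to a fixed landmark change by at most one along an edge, so Delta_ij <= 1 on
   edges. If Delta_ij <= 1, adding the edge {i, j} changes no distance to a landmark; if {i, j}
   is an edge with Delta_ij = 0, no shortest walk to a landmark uses it (its endpoints are at
   equal distance), so deleting it changes no such distance and keeps the graph connected.
   In both cases the defining uniqueness of a construction set forces the modified graph to
   be G, so the edge was already present, resp. Delta_ij = 0 is impossible on an edge. *)

definition reachable :: "'a set set \<Rightarrow> 'a \<Rightarrow> 'a \<Rightarrow> bool" where
  "reachable E u v \<longleftrightarrow> (\<exists>xs. walk E xs \<and> hd xs = u \<and> last xs = v)"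

lemma connected_graph_iff_reachable:
  "connected_graph V E \<longleftrightarrow> (\<forall>u\<in>V. \<forall>v\<in>V. reachable E u v)"
  by (simp add: connected_graph_def reachable_def)

lemma walk_singleton [simp]: "walk E [x]"
  by (simp add: walk_def)

lemma walk_Cons_Cons: "walk E (x # y # ys) \<longleftrightarrow> {x, y} \<in> E \<and> walk E (y # ys)"
proof -
  have "(\<forall>k. Suc k < length (x # y # ys) \<longrightarrow> {(x # y # ys) ! k, (x # y # ys) ! Suc k} \<in> E)
     \<longleftrightarrow> (\<forall>k < Suc (length (y # ys) - 1). {(x # y # ys) ! k, (x # y # ys) ! Suc k} \<in> E)"
    by auto
  also have "\<dots> \<longleftrightarrow> {x, y} \<in> E \<and>
      (\<forall>k. Suc k < length (y # ys) \<longrightarrow> {(y # ys) ! k, (y # ys) ! Suc k} \<in> E)"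
    unfolding All_less_Suc2 by auto
  finally show ?thesis unfolding walk_def by simp
qed

lemma walk_mono: "walk E xs \<Longrightarrow> E \<subseteq> E' \<Longrightarrow> walk E' xs"
  unfolding walk_def by blast

lemma walk_rev:
  assumes "walk E xs"
  shows "walk E (rev xs)"
  unfolding walk_def
proof (intro conjI allI impI)
  fix k assume k: "Suc k < length (rev xs)"
  let ?m = "length xs - Suc (Suc k)"
  have "{xs ! ?m, xs ! Suc ?m} \<in> E" using assms k unfolding walk_def by simp
  moreover have "Suc ?m = length xs - Suc k" using k by simp
  ultimately show "{rev xs ! k, rev xs ! Suc k} \<in> E"
    using k by (simp add: rev_nth insert_commute)
qed (use assms in \<open>simp add: walk_def\<close>)

lemma walk_append:
  "walk E xs \<Longrightarrow> walk E ys \<Longrightarrow> last xs = hd ys \<Longrightarrow> walk E (xs @ tl ys)"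
proof (induction xs rule: induct_list012)
  case 1 then show ?case by (simp add: walk_def)
next
  case (2 x)
  then show ?case by (cases ys) (auto simp: walk_def)
next
  case (3 x y zs)
  then show ?case by (simp add: walk_Cons_Cons)
qed

lemma reachable_sym:
  assumes "reachable E u v"
  shows "reachable E v u"
proof -
  obtain xs where "walk E xs" "hd xs = u" "last xs = v"
    using assms unfolding reachable_def by blast
  moreover from this have "xs \<noteq> []" by (simp add: walk_def)
  ultimately show ?thesis
    unfolding reachable_def by (intro exI[of _ "rev xs"]) (simp add: walk_rev hd_rev last_rev)
qed

lemma reachable_trans:
  assumes "reachable E u v" "reachable E v w"
  shows "reachable E u w"
proof -
  obtain xs ys where xs: "walk E xs" "hd xs = u" "last xs = v"
    and ys: "walk E ys" "hd ys = v" "last ys = w"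
    using assms unfolding reachable_def by blast
  have "xs \<noteq> []" "ys \<noteq> []" using xs ys by (simp_all add: walk_def)
  moreover have "last (xs @ tl ys) = w"
  proof (cases "tl ys = []")
    case True
    then show ?thesis using xs ys \<open>ys \<noteq> []\<close> by (metis append_Nil2 last_ConsL list.collapse)
  next
    case False
    then show ?thesis using ys by (simp add: last_tl)
  qed
  ultimately have "hd (xs @ tl ys) = u" "last (xs @ tl ys) = w" using xs by simp_all
  with walk_append[OF xs(1) ys(1)] xs ys show ?thesis
    unfolding reachable_def by auto
qed

lemma reachable_mono: "reachable E u v \<Longrightarrow> E \<subseteq> E' \<Longrightarrow> reachable E' u v"
  unfolding reachable_def using walk_mono by blast

lemma hdist_shortest_walk:
  assumes "reachable E u v"
  obtains xs where "walk E xs" "hd xs = u" "last xs = v" "length xs = Suc (hdist E u v)"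
proof -
  obtain xs where xs: "walk E xs" "hd xs = u" "last xs = v"
    using assms unfolding reachable_def by blast
  then have "length xs = Suc (length xs - 1)" by (simp add: walk_def)
  with xs have "\<exists>n xs. walk E xs \<and> hd xs = u \<and> last xs = v \<and> length xs = Suc n"
    by blast
  from LeastI_ex[OF this] show ?thesis
    using that unfolding hdist_def by blast
qed

lemma hdist_less_length:
  assumes "walk E xs" "hd xs = u" "last xs = v"
  shows "hdist E u v < length xs"
proof -
  have len: "length xs = Suc (length xs - 1)" using assms(1) by (simp add: walk_def)
  have "hdist E u v \<le> length xs - 1"
    unfolding hdist_def by (rule Least_le) (use assms len in blast)
  with len show ?thesis by linarith
qed

lemma hdist_refl [simp]: "hdist E u u = 0"
  using hdist_less_length[of E "[u]" u u] by simp

lemma hdist_mono: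
  assumes "E \<subseteq> E'" "reachable E u v"
  shows "hdist E' u v \<le> hdist E u v"
proof -
  obtain xs where "walk E xs" "hd xs = u" "last xs = v" "length xs = Suc (hdist E u v)"
    using hdist_shortest_walk[OF assms(2)] .
  with walk_mono[OF _ assms(1)] show ?thesis
    using hdist_less_length[of E' xs u v] by simp
qed

lemma hdist_edge_le:
  assumes "{x, y} \<in> E" "reachable E y A"
  shows "hdist E x A \<le> Suc (hdist E y A)"
proof -
  obtain ys where ys: "walk E ys" "hd ys = y" "last ys = A" "length ys = Suc (hdist E y A)"
    using hdist_shortest_walk[OF assms(2)] .
  then obtain zs where "ys = y # zs" by (cases ys) (auto simp: walk_def)
  with ys assms(1) have "walk E (x # ys)" "hd (x # ys) = x" "last (x # ys) = A"
    by (simp_all add: walk_Cons_Cons)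
  from hdist_less_length[OF this] ys(4) show ?thesis by simp
qed

lemma hdist_ge_if_lipschitz:
  assumes "f A = 0" "\<And>x y. {x, y} \<in> E \<Longrightarrow> f x \<le> Suc (f y)" "reachable E v A"
  shows "f v \<le> hdist E v A"
proof -
  have "f (hd xs) < length xs" if "walk E xs" "last xs = A" for xs
    using that
  proof (induction xs rule: induct_list012)
    case 1 then show ?case by (simp add: walk_def)
  next
    case (2 x) then show ?case using assms(1) by simp
  next
    case (3 x y zs)
    then have "{x, y} \<in> E" "f y < length (y # zs)" by (simp_all add: walk_Cons_Cons)
    with assms(2) show ?case by fastforce
  qed
  then show ?thesis
    using hdist_shortest_walk[OF assms(3)] by (metis less_Suc_eq_le)
qed

lemma shortest_walk_on_descending_edges:
  assumes "reachable E v B"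
    and descending: "\<And>x y. {x, y} \<in> E \<Longrightarrow> hdist E x B = Suc (hdist E y B) \<Longrightarrow> {x, y} \<in> E'"
  shows "\<exists>xs. walk E' xs \<and> hd xs = v \<and> last xs = B \<and> length xs = Suc (hdist E v B)"
  using assms(1)
proof (induction "hdist E v B" arbitrary: v)
  case 0
  then obtain xs where "walk E xs" "hd xs = v" "last xs = B" "length xs = Suc 0"
    using hdist_shortest_walk by metis
  then have "v = B" by (cases xs) auto
  with 0 show ?case by (intro exI[of _ "[v]"]) simp
next
  case (Suc n)
  then obtain xs where xs: "walk E xs" "hd xs = v" "last xs = B" "length xs = Suc (Suc n)"
    using hdist_shortest_walk by metis
  then obtain w ws where xs_eq: "xs = v # w # ws"
    by (cases xs; cases "tl xs") auto
  have edge: "{v, w} \<in> E" and tail: "walk E (w # ws)"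
    using xs(1) by (simp_all add: xs_eq walk_Cons_Cons)
  have w_reach: "reachable E w B"
    unfolding reachable_def using tail xs(3) xs_eq by fastforce
  have "hdist E w B < Suc n"
    using hdist_less_length[OF tail] xs(3,4) xs_eq by simp
  moreover have "hdist E v B \<le> Suc (hdist E w B)"
    using hdist_edge_le[OF edge w_reach] .
  ultimately have hw: "hdist E w B = n" using Suc.hyps(2) by linarith
  then obtain zs where zs: "walk E' zs" "hd zs = w" "last zs = B" "length zs = Suc n"
    using Suc.hyps(1) w_reach by metis
  then obtain zs' where "zs = w # zs'" by (cases zs) auto
  moreover have "{v, w} \<in> E'"
    using descending[OF edge] hw Suc.hyps(2) by simp
  ultimately show ?case
    using zs Suc.hyps(2) by (intro exI[of _ "v # zs"]) (simp add: walk_Cons_Cons)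
qed

lemma simple_graph_edge_in_vertices:
  assumes "simple_graph V E" "{x, y} \<in> E"
  shows "x \<in> V" "y \<in> V"
  using assms unfolding simple_graph_def by auto

lemma connected_graph_hdist_edge_le:
  assumes "simple_graph V E" "connected_graph V E" "A \<in> V" "{x, y} \<in> E"
  shows "hdist E x A \<le> Suc (hdist E y A)"
  using assms simple_graph_edge_in_vertices[OF assms(1,4)]
  by (auto simp: connected_graph_iff_reachable intro: hdist_edge_le)

lemma connected_graph_edge_hdist_close:
  assumes "simple_graph V E" "connected_graph V E" "A \<in> V" "{i, j} \<in> E"
  shows "\<bar>int (hdist E i A) - int (hdist E j A)\<bar> \<le> 1"
proof -
  have "{j, i} \<in> E" using assms(4) by (simp add: insert_commute)
  then have "hdist E i A \<le> Suc (hdist E j A)" "hdist E j A \<le> Suc (hdist E i A)"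
    using connected_graph_hdist_edge_le[OF assms(1-3)] assms(4) by blast+
  then show ?thesis by linarith
qed

lemma connected_graph_if_reachable_hub:
  assumes "\<And>v. v \<in> V \<Longrightarrow> reachable E v B"
  shows "connected_graph V E"
  unfolding connected_graph_iff_reachable
  using assms reachable_sym reachable_trans by metis

lemma hdist_insert_edge:
  assumes "simple_graph V E" "connected_graph V E" "A \<in> V" "v \<in> V"
    and "hdist E i A \<le> Suc (hdist E j A)" "hdist E j A \<le> Suc (hdist E i A)"
  shows "hdist (insert {i, j} E) v A = hdist E v A"
proof (rule antisym)
  have reach: "reachable E v A"
    using assms(2-4) by (simp add: connected_graph_iff_reachable)
  then show "hdist (insert {i, j} E) v A \<le> hdist E v A"
    by (rule hdist_mono[rotated]) blast
  have "hdist E x A \<le> Suc (hdist E y A)" if "{x, y} \<in> insert {i, j} E" for x y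
    using that connected_graph_hdist_edge_le[OF assms(1-3)] assms(5,6)
    by (auto simp: doubleton_eq_iff)
  with reach show "hdist E v A \<le> hdist (insert {i, j} E) v A"
    by (intro hdist_ge_if_lipschitz) (auto intro: reachable_mono)
qed

lemma reachable_remove_level_edge:
  assumes "reachable E v B" "hdist E i B = hdist E j B"
  shows "reachable (E - {{i, j}}) v B"
    and "hdist (E - {{i, j}}) v B \<le> hdist E v B"
proof -
  have "{x, y} \<in> E - {{i, j}}" if "{x, y} \<in> E" "hdist E x B = Suc (hdist E y B)" for x y
    using that assms(2) by (auto simp: doubleton_eq_iff)
  then obtain xs where "walk (E - {{i, j}}) xs" "hd xs = v" "last xs = B"
      "length xs = Suc (hdist E v B)"
    using shortest_walk_on_descending_edges[OF assms(1)] by blast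
  then show "reachable (E - {{i, j}}) v B" "hdist (E - {{i, j}}) v B \<le> hdist E v B"
    unfolding reachable_def using hdist_less_length by fastforce+
qed

lemma hdist_remove_level_edge:
  assumes "simple_graph V E" "connected_graph V E" "B \<in> V" "v \<in> V"
    and "hdist E i B = hdist E j B"
  shows "hdist (E - {{i, j}}) v B = hdist E v B"
proof (rule antisym)
  have reach: "reachable E v B"
    using assms(2-4) by (simp add: connected_graph_iff_reachable)
  then show "hdist (E - {{i, j}}) v B \<le> hdist E v B"
    using assms(5) by (rule reachable_remove_level_edge(2))
  show "hdist E v B \<le> hdist (E - {{i, j}}) v B"
    using reach reachable_remove_level_edge(1) assms(5)
      connected_graph_hdist_edge_le[OF assms(1-3)]
    by (intro hdist_ge_if_lipschitz) auto
qed

lemma construction_set_unique: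
  assumes "construction_set V E C" "simple_graph V E'" "connected_graph V E'"
    and "\<And>v A. v \<in> V \<Longrightarrow> A \<in> set C \<Longrightarrow> hdist E' v A = hdist E v A"
  shows "E' = E"
  using assms unfolding construction_set_def dvec_def by auto

lemma construction_set_edge_if_close:
  assumes "simple_graph V E" "connected_graph V E" "construction_set V E C"
    and "i \<in> V" "j \<in> V" "i \<noteq> j"
    and "\<forall>A\<in>set C. \<bar>int (hdist E i A) - int (hdist E j A)\<bar> \<le> 1"
  shows "{i, j} \<in> E"
proof -
  have "simple_graph V (insert {i, j} E)"
    using assms(1,4-6) unfolding simple_graph_def by auto
  moreover have "connected_graph V (insert {i, j} E)"
    using assms(2) by (auto simp: connected_graph_iff_reachable intro: reachable_mono)
  moreover have "hdist (insert {i, j} E) v A = hdist E v A" if "v \<in> V" "A \<in> set C" for v A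
  proof -
    have "A \<in> V"
      using assms(3) that(2) by (auto simp: construction_set_def landmark_set_def)
    moreover have "hdist E i A \<le> Suc (hdist E j A)" "hdist E j A \<le> Suc (hdist E i A)"
      using assms(7) that(2) by fastforce+
    ultimately show ?thesis
      using hdist_insert_edge[OF assms(1,2)] that(1) by blast
  qed
  ultimately have "insert {i, j} E = E"
    by (rule construction_set_unique[OF assms(3)])
  then show ?thesis by blast
qed

lemma construction_set_edge_not_level:
  assumes "simple_graph V E" "connected_graph V E" "construction_set V E C" "{i, j} \<in> E"
  shows "\<exists>A\<in>set C. hdist E i A \<noteq> hdist E j A"
proof (rule ccontr)
  assume "\<not> ?thesis"
  then have level: "\<And>A. A \<in> set C \<Longrightarrow> hdist E i A = hdist E j A" by blast
  have "C \<noteq> []" and CV: "set C \<subseteq> V"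
    using assms(3) by (simp_all add: construction_set_def landmark_set_def)
  then obtain B where B: "B \<in> set C" by (meson hd_in_set)
  have "simple_graph V (E - {{i, j}})"
    using assms(1) unfolding simple_graph_def by blast
  moreover have "connected_graph V (E - {{i, j}})"
    using assms(2) B CV level
    by (intro connected_graph_if_reachable_hub[of V _ B] reachable_remove_level_edge(1))
       (auto simp: connected_graph_iff_reachable)
  ultimately have "E - {{i, j}} = E"
    using construction_set_unique[OF assms(3)] hdist_remove_level_edge[OF assms(1,2)] level CV
    by blast
  with assms(4) show False by blast
qed

lemma Delta_le_iff:
  assumes "M \<noteq> []"
  shows "Delta E M i j \<le> d \<longleftrightarrow> (\<forall>A\<in>set M. \<bar>int (hdist E i A) - int (hdist E j A)\<bar> \<le> d)"
proof -
  let ?diff = "\<lambda>A. \<bar>int (hdist E i A) - int (hdist E j A)\<bar>"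
  have "(\<lambda>k. \<bar>int (dvec E M i ! k) - int (dvec E M j ! k)\<bar>) ` {..<length M}
      = ?diff ` ((!) M ` {..<length M})"
    by (auto simp: dvec_def)
  also have "(!) M ` {..<length M} = set M"
    by (auto simp: in_set_conv_nth)
  finally have "Delta E M i j = Max (?diff ` set M)"
    unfolding Delta_def by simp
  with assms show ?thesis by simp
qed

theorem mainTheorem5:
  fixes V :: "'a set" and E :: "'a set set" and C :: "'a list"
  assumes "simple_graph V E" and "connected_graph V E" and "construction_set V E C"
  shows "\<forall>i\<in>V. \<forall>j\<in>V. i \<noteq> j \<longrightarrow> ({i, j} \<in> E \<longleftrightarrow> Delta E C i j = 1)"
proof (intro ballI impI)
  fix i j assume ij: "i \<in> V" "j \<in> V" "i \<noteq> j"
  have "C \<noteq> []" and CV: "set C \<subseteq> V"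
    using assms(3) by (simp_all add: construction_set_def landmark_set_def)
  note Delta_le = Delta_le_iff[OF \<open>C \<noteq> []\<close>]
  have "{i, j} \<in> E \<longleftrightarrow> Delta E C i j \<le> 1"
    unfolding Delta_le
    using construction_set_edge_if_close[OF assms ij]
      connected_graph_edge_hdist_close[OF assms(1,2)] CV
    by blast
  moreover have "\<not> Delta E C i j \<le> 0" if "{i, j} \<in> E"
    using construction_set_edge_not_level[OF assms that] by (auto simp: Delta_le)
  ultimately show "{i, j} \<in> E \<longleftrightarrow> Delta E C i j = 1"
    by linarith
qed

end
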